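(* Let $G$ be the infinite strong grid with vertex set $\mathbb{Z}^2$, where $(i_1,j_1)$ and $(i_2,j_2)$ are adjacent iff $\max\{|i_1-i_2|,|j_1-j_2|\}=1$. Let $L=\{k(2,1)+l(-1,3): k,l\in\mathbb{Z}\}$ and $L'=\{k(1,3)+l(2,-1): k,l\in\mathbb{Z}\}$ (both subgroups of $\mathbb{Z}^2$ of index $7$). Then: (1) if guards occupy exactly the vertices of a translate $p+L$ ($p\in\mathbb{Z}^2$), then for every vertex $v\in\mathbb{Z}^2$ there is a translate $q+L'$ with $v\in q+L'$ and a bijection $f:p+L\to q+L'$ such that for every $x\in p+L$ either $f(x)=x$ or $f(x)$ is adjacent to $x$; (2) symmetrically, if guards occupy exactly a translate $p'+L'$, then for every vertex $v$ there is a translate $q'+L$ containing $v$ and a bijection $f:p'+L'\to q'+L$ with each $f(x)$ equal or adjacent to $x$. Consequently, starting from guards on a translate of $L$ (one guard per vertex), the guards can respond to every infinite sequence of attacks in the all-guards-move eternal domination game on $G$, always keeping at most one guard per vertex, occupying each attacked vertex, and alternating between translates of $L$ and translates of $L'$ (each of which is a dominating set of $G$); i.e. they eternally dominate $G$.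
   Context: Eternal domination game (all-guards-move model): guards are placed on distinct vertices of a graph forming a dominating set; at each turn an attacker chooses a vertex, and then every guard may stay in place or move to an adjacent vertex, with no two guards ending on the same vertex, and some guard must end on the attacked vertex. The guards eternally dominate the graph if they can do so, maintaining a dominating set, against every infinite sequence of attacks. *)

theory Defs
  imports Main
begin

type_synonym vtx = "int \<times> int"

definition strong_adj :: "vtx \<Rightarrow> vtx \<Rightarrow> bool" where
  "strong_adj u v \<longleftrightarrow> max \<bar>fst u - fst v\<bar> \<bar>snd u - snd v\<bar> = 1"

definition latL :: "vtx set" where
  "latL = {(2*k + l*(-1), k + 3*l) | k l. True}"

definition latL' :: "vtx set" where
  "latL' = {(k + 2*l, 3*k + l*(-1)) | k l. True}"

definition translate :: "vtx \<Rightarrow> vtx set \<Rightarrow> vtx set" where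
  "translate p A = {(fst p + fst a, snd p + snd a) | a. a \<in> A}"

definition dominating :: "('a \<Rightarrow> 'a \<Rightarrow> bool) \<Rightarrow> 'a set \<Rightarrow> bool" where
  "dominating adj D \<longleftrightarrow> (\<forall>v. v \<in> D \<or> (\<exists>u\<in>D. adj u v))"

definition guard_move :: "('a \<Rightarrow> 'a \<Rightarrow> bool) \<Rightarrow> 'a set \<Rightarrow> 'a set \<Rightarrow> ('a \<Rightarrow> 'a) \<Rightarrow> bool" where
  "guard_move adj D D' f \<longleftrightarrow> bij_betw f D D' \<and> (\<forall>x\<in>D. f x = x \<or> adj x (f x))"

text \<open>A (history-dependent) guard strategy: sigma maps the finite sequence of attacks so far
  to the current guard configuration.\<close>
definition eternal_strategy :: "('a \<Rightarrow> 'a \<Rightarrow> bool) \<Rightarrow> 'a set \<Rightarrow> ('a list \<Rightarrow> 'a set) \<Rightarrow> bool" where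
  "eternal_strategy adj D0 \<sigma> \<longleftrightarrow>
     \<sigma> [] = D0 \<and>
     (\<forall>as. dominating adj (\<sigma> as)) \<and>
     (\<forall>as v. v \<in> \<sigma> (as @ [v]) \<and> (\<exists>f. guard_move adj (\<sigma> as) (\<sigma> (as @ [v])) f))"

definition eternally_dominates :: "('a \<Rightarrow> 'a \<Rightarrow> bool) \<Rightarrow> 'a set \<Rightarrow> bool" where
  "eternally_dominates adj D0 \<longleftrightarrow> (\<exists>\<sigma>. eternal_strategy adj D0 \<sigma>)"

end

theory Submission
  imports Defs
begin

text \<open>
  Both lattices are described by congruences: z \<in> L iff x \<equiv> 2y and z \<in> L' iff x \<equiv> -2y (mod 7).
  As distinct subgroups of prime index, L + L' = Z^2, so any coset of L and any coset of L'
  share a common base point b. Relative to b, a guard of b + L whose second coordinate is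
  \<equiv> r (mod 7) takes one king step determined by r, landing in b + L'; the residues are paired
  up 1 \<leftrightarrow> 2, 3 \<leftrightarrow> 4, 5 \<leftrightarrow> 6, which makes the step invertible. Since the attacked vertex v lies in
  v + L', choosing b for the cosets p + L and v + L' answers the attack; the inverse step answers
  attacks on L'-configurations. Alternating the two kinds of moves gives the strategy.
\<close>

lemma guard_move_inverse:
  assumes "symp adj" and "guard_move adj D D' f"
  shows "guard_move adj D' D (inv_into D f)"
proof -
  have bij: "bij_betw f D D'" and steps: "\<forall>x\<in>D. f x = x \<or> adj x (f x)"
    using assms(2) by (auto simp: guard_move_def)
  have "inv_into D f y = y \<or> adj y (inv_into D f y)" if "y \<in> D'" for y
  proof -
    have "inv_into D f y \<in> D" and "f (inv_into D f y) = y"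
      using bij that by (auto simp: bij_betw_def inv_into_into f_inv_into_f)
    then show ?thesis using steps assms(1) by (metis sympD)
  qed
  then show ?thesis by (simp add: guard_move_def bij_betw_inv_into bij)
qed

lemma dominating_if_attacks_answered:
  assumes "\<And>v. \<exists>D' f. v \<in> D' \<and> guard_move adj D D' f"
  shows "dominating adj D"
  unfolding dominating_def
proof
  fix v
  obtain D' f where "v \<in> D'" and move: "guard_move adj D D' f" using assms by blast
  then obtain x where "x \<in> D" "f x = v"
    by (auto simp: guard_move_def bij_betw_def)
  with move show "v \<in> D \<or> (\<exists>u\<in>D. adj u v)" by (auto simp: guard_move_def)
qed

text \<open>The configuration after an attack history, given a response function r that receives the
  number of earlier attacks; the history is stored newest first.\<close>

fun replay :: "(nat \<Rightarrow> 'a set \<Rightarrow> 'a \<Rightarrow> 'a set) \<Rightarrow> 'a set \<Rightarrow> 'a list \<Rightarrow> 'a set" where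
  "replay r D0 [] = D0"
| "replay r D0 (v # vs) = r (length vs) (replay r D0 vs) v"

lemma eternal_strategy_alternating:
  assumes "A D0"
    and A_to_B: "\<And>D v. A D \<Longrightarrow> \<exists>D' f. B D' \<and> v \<in> D' \<and> guard_move adj D D' f"
    and B_to_A: "\<And>D v. B D \<Longrightarrow> \<exists>D' f. A D' \<and> v \<in> D' \<and> guard_move adj D D' f"
  shows "\<exists>\<sigma>. eternal_strategy adj D0 \<sigma> \<and>
           (\<forall>as. (even (length as) \<longrightarrow> A (\<sigma> as)) \<and> (odd (length as) \<longrightarrow> B (\<sigma> as)))"
proof -
  define turn where "turn (n::nat) D \<longleftrightarrow> (if even n then A D else B D)" for n D
  define r where "r n D v = (SOME D'. turn (Suc n) D' \<and> v \<in> D' \<and> (\<exists>f. guard_move adj D D' f))"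
    for n D v
  have respond: "turn (Suc n) (r n D v) \<and> v \<in> r n D v \<and> (\<exists>f. guard_move adj D (r n D v) f)"
    if "turn n D" for n D v
    unfolding r_def
  proof (rule someI_ex)
    show "\<exists>D'. turn (Suc n) D' \<and> v \<in> D' \<and> (\<exists>f. guard_move adj D D' f)"
      using that A_to_B[of D v] B_to_A[of D v] by (auto simp: turn_def split: if_splits)
  qed
  define \<sigma> where "\<sigma> as = replay r D0 (rev as)" for as
  have \<sigma>_snoc: "\<sigma> (as @ [v]) = r (length as) (\<sigma> as) v" for as v
    by (simp add: \<sigma>_def)
  have turn_\<sigma>: "turn (length as) (\<sigma> as)" for as
  proof (induction as rule: rev_induct)
    case Nil
    then show ?case by (simp add: \<sigma>_def turn_def assms(1))
  next
    case (snoc v as)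
    then show ?case using respond by (simp add: \<sigma>_snoc)
  qed
  have "dominating adj (\<sigma> as)" for as
    using turn_\<sigma>[of as] A_to_B B_to_A
    by (intro dominating_if_attacks_answered) (fastforce simp: turn_def split: if_splits)
  then have "eternal_strategy adj D0 \<sigma>"
    using respond turn_\<sigma> by (simp add: eternal_strategy_def \<sigma>_snoc) (simp add: \<sigma>_def)
  moreover have "(even (length as) \<longrightarrow> A (\<sigma> as)) \<and> (odd (length as) \<longrightarrow> B (\<sigma> as))" for as
    using turn_\<sigma>[of as] by (simp add: turn_def)
  ultimately show ?thesis by blast
qed

lemma mem_translate: "z \<in> translate q A \<longleftrightarrow> (fst z - fst q, snd z - snd q) \<in> A"
  by (force simp: translate_def)

lemma latL_eq: "latL = {z. 7 dvd fst z - 2 * snd z}"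
proof (intro set_eqI iffI)
  fix z :: vtx
  assume "z \<in> {z. 7 dvd fst z - 2 * snd z}"
  then obtain m where m: "fst z - 2 * snd z = 7 * m" by auto
  then have "z = (2 * (snd z + 3 * m) + (- m) * (-1), (snd z + 3 * m) + 3 * (- m))"
    by (simp add: prod_eq_iff)
  then show "z \<in> latL" unfolding latL_def by blast
qed (auto simp: latL_def)

lemma latL'_eq: "latL' = {z. 7 dvd fst z + 2 * snd z}"
proof (intro set_eqI iffI)
  fix z :: vtx
  assume "z \<in> {z. 7 dvd fst z + 2 * snd z}"
  then obtain m where m: "fst z + 2 * snd z = 7 * m" by auto
  then have "z = (m + 2 * (3 * m - snd z), 3 * m + (3 * m - snd z) * (-1))"
    by (simp add: prod_eq_iff)
  then show "z \<in> latL'" unfolding latL'_def by blast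
qed (auto simp: latL'_def)

lemma mem_translate_latL:
  "z \<in> translate q latL \<longleftrightarrow> 7 dvd (fst z - fst q) - 2 * (snd z - snd q)"
  by (simp add: mem_translate latL_eq)

lemma mem_translate_latL':
  "z \<in> translate q latL' \<longleftrightarrow> 7 dvd (fst z - fst q) + 2 * (snd z - snd q)"
  by (simp add: mem_translate latL'_eq)

lemma translate_latL_cong:
  assumes "7 dvd (fst p - fst q) - 2 * (snd p - snd q)"
  shows "translate p latL = translate q latL"
proof (rule set_eqI)
  fix z :: vtx
  have "(fst z - fst q) - 2 * (snd z - snd q)
      = ((fst z - fst p) - 2 * (snd z - snd p)) + ((fst p - fst q) - 2 * (snd p - snd q))"
    by simp
  then show "z \<in> translate p latL \<longleftrightarrow> z \<in> translate q latL"
    unfolding mem_translate_latL by (metis assms dvd_add_left_iff)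
qed

lemma translate_latL'_cong:
  assumes "7 dvd (fst p - fst q) + 2 * (snd p - snd q)"
  shows "translate p latL' = translate q latL'"
proof (rule set_eqI)
  fix z :: vtx
  have "(fst z - fst q) + 2 * (snd z - snd q)
      = ((fst z - fst p) + 2 * (snd z - snd p)) + ((fst p - fst q) + 2 * (snd p - snd q))"
    by simp
  then show "z \<in> translate p latL' \<longleftrightarrow> z \<in> translate q latL'"
    unfolding mem_translate_latL' by (metis assms dvd_add_left_iff)
qed

text \<open>The base point solves b1 - 2 b2 \<equiv> a and b1 + 2 b2 \<equiv> c, using 2 * 4 \<equiv> 1 (mod 7).\<close>

lemma common_base: "\<exists>b. translate b latL = translate p latL \<and> translate b latL' = translate q latL'"
proof -
  define a where "a = fst p - 2 * snd p"
  define c where "c = fst q + 2 * snd q"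
  define b :: vtx where "b = (4 * (a + c), 2 * (c - a))"
  have "(fst b - fst p) - 2 * (snd b - snd p) = 7 * a"
    by (simp add: a_def b_def algebra_simps)
  then have "translate b latL = translate p latL" by (intro translate_latL_cong) simp
  moreover have "(fst b - fst q) + 2 * (snd b - snd q) = 7 * c"
    by (simp add: c_def b_def algebra_simps)
  then have "translate b latL' = translate q latL'" by (intro translate_latL'_cong) simp
  ultimately show ?thesis by blast
qed

definition hop :: "int \<Rightarrow> int \<times> int" where
  "hop r = [(0,0), (1,1), (1,-1), (0,1), (0,-1), (-1,1), (-1,-1)] ! nat (r mod 7)"

lemma mod7_cases:
  fixes Y :: int
  obtains "Y mod 7 = 0" | "Y mod 7 = 1" | "Y mod 7 = 2" | "Y mod 7 = 3" | "Y mod 7 = 4"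
    | "Y mod 7 = 5" | "Y mod 7 = 6"
proof -
  have "Y mod 7 = 0 \<or> Y mod 7 = 1 \<or> Y mod 7 = 2 \<or> Y mod 7 = 3 \<or> Y mod 7 = 4
      \<or> Y mod 7 = 5 \<or> Y mod 7 = 6"
    by presburger
  then show ?thesis by (elim disjE) (erule that)+
qed

lemma hop_king_step: "hop r = (0, 0) \<or> max \<bar>fst (hop r)\<bar> \<bar>snd (hop r)\<bar> = 1"
proof -
  have "hop r \<in> set [(0,0), (1,1), (1,-1), (0,1), (0,-1), (-1,1), (-1,-1)]"
    unfolding hop_def by (rule nth_mem) (simp add: nat_less_iff)
  then show ?thesis by auto
qed

lemma hop_lands_in_latL':
  fixes X Y :: int
  assumes "7 dvd X - 2 * Y"
  shows "7 dvd (X + fst (hop (Y mod 7))) + 2 * (Y + snd (hop (Y mod 7)))"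
  using assms by (cases rule: mod7_cases[of Y]) (simp_all add: hop_def; presburger)+

lemma hop_lands_in_latL:
  fixes X Y :: int
  assumes "7 dvd X + 2 * Y"
  shows "7 dvd (X - fst (hop (Y mod 7))) - 2 * (Y + snd (hop (Y mod 7)))"
  using assms by (cases rule: mod7_cases[of Y]) (simp_all add: hop_def; presburger)+

lemma hop_return:
  fixes Y :: int
  shows "hop ((Y + snd (hop (Y mod 7))) mod 7) = (fst (hop (Y mod 7)), - snd (hop (Y mod 7)))"
proof (cases rule: mod7_cases[of Y])
  case 2
  then have "(Y + 1) mod 7 = 2" by presburger
  with 2 show ?thesis by (simp add: hop_def)
next
  case 3
  then have "(Y - 1) mod 7 = 1" by presburger
  with 3 show ?thesis by (simp add: hop_def)
next
  case 4
  then have "(Y + 1) mod 7 = 4" by presburger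
  with 4 show ?thesis by (simp add: hop_def)
next
  case 5
  then have "(Y - 1) mod 7 = 3" by presburger
  with 5 show ?thesis by (simp add: hop_def)
next
  case 6
  then have "(Y + 1) mod 7 = 6" by presburger
  with 6 show ?thesis by (simp add: hop_def)
next
  case 7
  then have "(Y - 1) mod 7 = 5" by presburger
  with 7 show ?thesis by (simp add: hop_def)
qed (simp add: hop_def)

definition slide :: "vtx \<Rightarrow> vtx \<Rightarrow> vtx" where
  "slide b z = (let d = hop ((snd z - snd b) mod 7) in (fst z + fst d, snd z + snd d))"

definition unslide :: "vtx \<Rightarrow> vtx \<Rightarrow> vtx" where
  "unslide b z = (let d = hop ((snd z - snd b) mod 7) in (fst z - fst d, snd z + snd d))"

lemma unslide_slide: "unslide b (slide b z) = z"
  using hop_return[of "snd z - snd b"]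
  by (simp add: slide_def unslide_def Let_def add.commute add.left_commute diff_add_eq)

lemma slide_unslide: "slide b (unslide b z) = z"
  using hop_return[of "snd z - snd b"]
  by (simp add: slide_def unslide_def Let_def add.commute add.left_commute diff_add_eq)

lemma slide_mem: "z \<in> translate b latL \<Longrightarrow> slide b z \<in> translate b latL'"
  using hop_lands_in_latL'[of "fst z - fst b" "snd z - snd b"]
  by (simp add: mem_translate_latL mem_translate_latL' slide_def Let_def algebra_simps)

lemma unslide_mem: "z \<in> translate b latL' \<Longrightarrow> unslide b z \<in> translate b latL"
  using hop_lands_in_latL[of "fst z - fst b" "snd z - snd b"]
  by (simp add: mem_translate_latL mem_translate_latL' unslide_def Let_def algebra_simps)

lemma bij_betw_slide: "bij_betw (slide b) (translate b latL) (translate b latL')"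
  by (rule bij_betw_byWitness[where f' = "unslide b"])
    (auto simp: unslide_slide slide_unslide slide_mem unslide_mem)

lemma slide_adj: "slide b z = z \<or> strong_adj z (slide b z)"
  using hop_king_step[of "(snd z - snd b) mod 7"]
  by (auto simp: slide_def strong_adj_def Let_def prod_eq_iff)

lemma guard_move_slide:
  "guard_move strong_adj (translate b latL) (translate b latL') (slide b)"
  by (simp add: guard_move_def bij_betw_slide slide_adj)

lemma answer_on_latL:
  "\<exists>q f. v \<in> translate q latL' \<and> guard_move strong_adj (translate p latL) (translate q latL') f"
proof -
  obtain b where b: "translate b latL = translate p latL" "translate b latL' = translate v latL'"
    using common_base by blast
  have "v \<in> translate v latL'" by (simp add: mem_translate_latL')
  then show ?thesis using guard_move_slide[of b] b by metis
qed

lemma answer_on_latL':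
  "\<exists>q f. v \<in> translate q latL \<and> guard_move strong_adj (translate p latL') (translate q latL) f"
proof -
  obtain b where b: "translate b latL = translate v latL" "translate b latL' = translate p latL'"
    using common_base by blast
  have "symp strong_adj" by (auto simp: symp_def strong_adj_def abs_minus_commute)
  then have "guard_move strong_adj (translate b latL') (translate b latL)
      (inv_into (translate b latL) (slide b))"
    by (rule guard_move_inverse) (rule guard_move_slide)
  moreover have "v \<in> translate v latL" by (simp add: mem_translate_latL)
  ultimately show ?thesis using b by metis
qed

theorem mainTheorem1:
  shows "(\<forall>p v. \<exists>q f. v \<in> translate q latL' \<and>
            guard_move strong_adj (translate p latL) (translate q latL') f)
    \<and> (\<forall>p v. \<exists>q f. v \<in> translate q latL \<and>
            guard_move strong_adj (translate p latL') (translate q latL) f)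
    \<and> (\<forall>p. \<exists>\<sigma>. eternal_strategy strong_adj (translate p latL) \<sigma> \<and>
            (\<forall>as. (even (length as) \<longrightarrow> (\<exists>q. \<sigma> as = translate q latL)) \<and>
                  (odd (length as) \<longrightarrow> (\<exists>q. \<sigma> as = translate q latL'))))
    \<and> (\<forall>p. eternally_dominates strong_adj (translate p latL))"
proof -
  have strategy: "\<exists>\<sigma>. eternal_strategy strong_adj (translate p latL) \<sigma> \<and>
            (\<forall>as. (even (length as) \<longrightarrow> (\<exists>q. \<sigma> as = translate q latL)) \<and>
                  (odd (length as) \<longrightarrow> (\<exists>q. \<sigma> as = translate q latL')))" for p
  proof (rule eternal_strategy_alternating)
    fix D v
    assume "\<exists>q. D = translate q latL"
    then show "\<exists>D' f. (\<exists>q. D' = translate q latL') \<and> v \<in> D' \<and> guard_move strong_adj D D' f"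
      using answer_on_latL by metis
  next
    fix D v
    assume "\<exists>q. D = translate q latL'"
    then show "\<exists>D' f. (\<exists>q. D' = translate q latL) \<and> v \<in> D' \<and> guard_move strong_adj D D' f"
      using answer_on_latL' by metis
  qed blast
  then have "eternally_dominates strong_adj (translate p latL)" for p
    unfolding eternally_dominates_def by blast
  with strategy answer_on_latL answer_on_latL' show ?thesis by blast
qed

end
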